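(* Let $g:(0,\infty)\to(0,\infty)$ decrease monotonically to zero, let $k\in\mathbb N$ with $k\ge2$, and let $\mathfrak N=\{e\in\mathfrak E_d: 0\in e\}$. If there exist $\epsilon>0$ and $n^*\in\mathbb N$ such that $\Lambda_g(n)/\log\log n\ge k+\epsilon$ for all $n\ge n^*$, then for every $A\in\{A_{1,k},\dots,A_{k,k}\}$ $$\mathbb P\Big[\limsup_{n\to\infty}\bigcap_{z\in B_n\cap A}J_{g(n)}(\mathfrak N\circ\tau_z)\Big]=0,$$ i.e., $\mathbb P$-a.s. for $n$ large enough there is a site $z_n\in B_n\cap A$ all of whose incident edges have conductance $\le g(n)$. Consequently, $\mathbb P$-a.s. for $n$ large enough there exist $k$ distinct sites $z_{(1,n)},\dots,z_{(k,n)}\in B_n$ with $\pi_{z_{(i,n)}}\le 2d\,g(n)$ for all $i\le k$.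
   Context: Let $d\ge2$, $\mathfrak E_d$ the nearest-neighbour edges of $\mathbb Z^d$, $x\sim y$ if $|x-y|_1=1$. Conductances $(w_e)_{e\in\mathfrak E_d}$ are i.i.d. $(0,\infty)$-valued with law $\mathbb P$; $w$ a generic copy. $B_n=[-n,n]^d\cap\mathbb Z^d$, $\pi_x=\sum_{y\sim x}w_{xy}$, $\Lambda_g(u)=u^d\,\mathbb P[w\le g(u)]^{2d}$. $J_\alpha(\mathfrak A)=\{\exists e\in\mathfrak A: w_e>\alpha\}$; $\mathfrak A\circ\tau_z=\{\{x+z,y+z\}:\{x,y\}\in\mathfrak A\}$. For $1\le i\le k$, $A_{i,k}=\{z\in\mathbb Z^d: z_1+\dots+z_d\equiv i \bmod k\}$. $\limsup_n E_n=\bigcap_n\bigcup_{k\ge n}E_k$. *)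

theory Defs
  imports "HOL-Probability.Probability"
begin

text \<open>Sites of Z^d are functions from a finite index type 'd (with CARD('d) = d) to int.
  Nearest-neighbour edges are the unordered pairs {x,y} with |x-y|_1 = 1.\<close>

definition nbr :: "('d::finite \<Rightarrow> int) \<Rightarrow> ('d \<Rightarrow> int) \<Rightarrow> bool" where
  "nbr x y \<longleftrightarrow> (\<Sum>i\<in>UNIV. \<bar>x i - y i\<bar>) = 1"

definition edges :: "('d::finite \<Rightarrow> int) set set" where
  "edges = {{x, y} | x y. nbr x y}"

definition box :: "nat \<Rightarrow> ('d::finite \<Rightarrow> int) set" where
  "box n = {z. \<forall>i. \<bar>z i\<bar> \<le> int n}"

definition pi_site :: "(('d::finite \<Rightarrow> int) set \<Rightarrow> real) \<Rightarrow> ('d \<Rightarrow> int) \<Rightarrow> real" where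
  "pi_site w x = (\<Sum>y\<in>{y. nbr x y}. w {x, y})"

definition Lambda :: "real measure \<Rightarrow> (real \<Rightarrow> real) \<Rightarrow> nat \<Rightarrow> real \<Rightarrow> real" where
  "Lambda W g d u = u ^ d * (measure W {..g u}) ^ (2 * d)"

definition J :: "real \<Rightarrow> ('d::finite \<Rightarrow> int) set set \<Rightarrow> (('d \<Rightarrow> int) set \<Rightarrow> real) \<Rightarrow> bool" where
  "J \<alpha> A w \<longleftrightarrow> (\<exists>e\<in>A. w e > \<alpha>)"

definition shift_edges :: "('d::finite \<Rightarrow> int) set set \<Rightarrow> ('d \<Rightarrow> int) \<Rightarrow> ('d \<Rightarrow> int) set set" where
  "shift_edges A z = {{(\<lambda>j. x j + z j), (\<lambda>j. y j + z j)} | x y. {x, y} \<in> A}"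

definition origin_edges :: "('d::finite \<Rightarrow> int) set set" where
  "origin_edges = {e \<in> edges. (\<lambda>_. (0::int)) \<in> e}"

definition Aclass :: "nat \<Rightarrow> nat \<Rightarrow> ('d::finite \<Rightarrow> int) set" where
  "Aclass i k = {z. (\<Sum>j\<in>UNIV. z j) mod int k = int i mod int k}"

end

theory Submission
  imports Defs
begin

text \<open>Sites of one residue class of the coordinate sum modulo \<open>k \<ge> 2\<close> are pairwise
  non-adjacent, so their sets of incident edges are disjoint and the events ``some incident edge
  has conductance \<open>> t\<close>'' are independent. A site has all its \<open>2d\<close> incident conductances
  \<open>\<le> t\<close> with probability \<open>q^(2d)\<close>, \<open>q = P[w \<le> t]\<close>, so every site of \<open>S\<close> has a large
  edge with probability at most \<open>exp (-|S| q^(2d))\<close>. As \<open>|B_n \<inter> A| \<approx> (2n)^d / k\<close>, the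
  growth assumption on \<open>\<Lambda>_g\<close> bounds this by \<open>(ln 2n)^(-\<beta>)\<close> with \<open>\<beta> > 1\<close>, which is
  summable along \<open>n = 2^j\<close>; monotonicity of the boxes and of \<open>g\<close> reduces the lim sup to
  these dyadic scales, and Borel--Cantelli applies. One good site in each of the \<open>k\<close> classes
  then gives \<open>k\<close> distinct sites with \<open>\<pi> \<le> 2d g(n)\<close>.\<close>

section \<open>Lattice geometry\<close>

definition site_edges :: "('d::finite \<Rightarrow> int) \<Rightarrow> ('d \<Rightarrow> int) set set" where
  "site_edges z = (\<lambda>y. {z, y}) ` {y. nbr z y}"

lemma nbr_iff_unit_step:
  fixes x y :: "'d::finite \<Rightarrow> int"
  shows "nbr x y \<longleftrightarrow> (\<exists>i s. (s = 1 \<or> s = -1) \<and> y = x(i := x i + s))"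
proof
  assume "nbr x y"
  define a where "a j = \<bar>x j - y j\<bar>" for j
  have sum_a: "sum a UNIV = 1" using \<open>nbr x y\<close> by (simp add: nbr_def a_def)
  have a_nonneg: "a j \<ge> 0" for j by (simp add: a_def)
  obtain i where "a i \<noteq> 0"
    using sum_a by (metis sum.neutral zero_neq_one)
  have split: "sum a UNIV = a i + sum a (UNIV - {i})"
    by (simp add: sum.remove)
  have "sum a (UNIV - {i}) \<ge> 0" by (intro sum_nonneg a_nonneg)
  then have "a i = 1" and "sum a (UNIV - {i}) = 0"
    using \<open>a i \<noteq> 0\<close> a_nonneg[of i] split sum_a by linarith+
  then have others: "a j = 0" if "j \<noteq> i" for j
    using that sum_nonneg_eq_0_iff[of "UNIV - {i}" a] a_nonneg by auto
  show "\<exists>i s. (s = 1 \<or> s = -1) \<and> y = x(i := x i + s)"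
  proof (intro exI conjI)
    show "y i - x i = 1 \<or> y i - x i = -1"
      using \<open>a i = 1\<close> by (auto simp: a_def abs_if split: if_splits)
    show "y = x(i := x i + (y i - x i))"
      using others by (auto simp: a_def fun_eq_iff)
  qed
next
  assume "\<exists>i s. (s = 1 \<or> s = -1) \<and> y = x(i := x i + s)"
  then obtain i s where s: "s = 1 \<or> s = -1" and y: "y = x(i := x i + s)" by blast
  have unit: "(\<lambda>j. \<bar>x j - y j\<bar>) = (\<lambda>j. if j = i then 1 else 0)"
    using s by (auto simp: y fun_eq_iff)
  show "nbr x y" unfolding nbr_def unit by simp
qed

lemma nbr_commute: "nbr x y \<longleftrightarrow> nbr y x"
  unfolding nbr_def by (simp add: abs_minus_commute)

lemma nbr_translate: "nbr (\<lambda>j. x j + z j) (\<lambda>j. y j + z j) \<longleftrightarrow> nbr x y"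
  unfolding nbr_def by simp

lemma nbr_subset_unit_steps:
  fixes x :: "'d::finite \<Rightarrow> int"
  shows "{y. nbr x y} \<subseteq> (\<lambda>(i, s). x(i := x i + s)) ` (UNIV \<times> {1, -1})"
  using nbr_iff_unit_step[of x] by force

lemma finite_nbr: "finite {y. nbr (x::'d::finite \<Rightarrow> int) y}"
  by (rule finite_subset[OF nbr_subset_unit_steps]) auto

lemma card_nbr_le: "card {y. nbr (x::'d::finite \<Rightarrow> int) y} \<le> 2 * CARD('d)"
proof -
  have "card {y. nbr x y} \<le> card ((\<lambda>(i, s). x(i := x i + s)) ` (UNIV \<times> {1::int, -1}))"
    by (rule card_mono[OF _ nbr_subset_unit_steps]) auto
  also have "\<dots> \<le> card (UNIV \<times> {1::int, -1} :: ('d \<times> int) set)"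
    by (rule card_image_le) auto
  also have "\<dots> = 2 * CARD('d)" by (simp add: card_cartesian_product)
  finally show ?thesis .
qed

lemma nbr_coordinate_sum:
  fixes x y :: "'d::finite \<Rightarrow> int"
  assumes "nbr x y"
  shows "(\<Sum>j\<in>UNIV. y j) = (\<Sum>j\<in>UNIV. x j) + 1 \<or> (\<Sum>j\<in>UNIV. y j) = (\<Sum>j\<in>UNIV. x j) - 1"
proof -
  obtain i s where s: "s = 1 \<or> s = -1" and y: "y = x(i := x i + s)"
    using assms nbr_iff_unit_step by blast
  have "(\<Sum>j\<in>UNIV. y j) = (\<Sum>j\<in>UNIV. x j + (if j = i then s else 0))"
    by (intro sum.cong) (auto simp: y)
  also have "\<dots> = (\<Sum>j\<in>UNIV. x j) + s" by (simp add: sum.distrib)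
  finally show ?thesis using s by auto
qed

lemma shift_origin_edges: "shift_edges origin_edges z = site_edges z"
proof (rule set_eqI)
  fix e
  show "e \<in> shift_edges origin_edges z \<longleftrightarrow> e \<in> site_edges z"
  proof
    assume "e \<in> shift_edges origin_edges z"
    then obtain x y where e: "e = {(\<lambda>j. x j + z j), (\<lambda>j. y j + z j)}"
      and "{x, y} \<in> origin_edges"
      unfolding shift_edges_def by blast
    then have "nbr x y" and origin: "(\<lambda>_. 0) \<in> {x, y}"
      unfolding origin_edges_def edges_def by (auto simp: doubleton_eq_iff nbr_commute)
    then consider "x = (\<lambda>_. 0)" "nbr z (\<lambda>j. y j + z j)" | "y = (\<lambda>_. 0)" "nbr z (\<lambda>j. x j + z j)"
      using nbr_translate[of x z y] nbr_translate[of y z x] nbr_commute by force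
    then show "e \<in> site_edges z"
      by cases (auto simp: e site_edges_def image_iff insert_commute)
  next
    assume "e \<in> site_edges z"
    then obtain y where e: "e = {z, y}" and "nbr z y" unfolding site_edges_def by blast
    define y' where "y' = (\<lambda>j. y j - z j)"
    have "nbr (\<lambda>_. 0) y'"
      using \<open>nbr z y\<close> nbr_translate[of "\<lambda>_. 0" z y'] by (simp add: y'_def)
    then have "{(\<lambda>_. 0), y'} \<in> origin_edges"
      unfolding origin_edges_def edges_def by blast
    moreover have "e = {(\<lambda>j. (\<lambda>_. 0::int) j + z j), (\<lambda>j. y' j + z j)}"
      by (simp add: e y'_def)
    ultimately show "e \<in> shift_edges origin_edges z"
      unfolding shift_edges_def by (intro CollectI exI[of _ "\<lambda>_. 0::int"] exI[of _ y'] conjI)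
  qed
qed

lemma site_edges_subset_edges: "site_edges z \<subseteq> edges"
  unfolding site_edges_def edges_def by blast

lemma finite_site_edges: "finite (site_edges z)"
  unfolding site_edges_def by (intro finite_imageI finite_nbr)

lemma card_site_edges_le: "card (site_edges (z::'d::finite \<Rightarrow> int)) \<le> 2 * CARD('d)"
  unfolding site_edges_def
  using card_image_le[OF finite_nbr, of "\<lambda>y. {z, y}" z] card_nbr_le[of z] by linarith

lemma site_edges_nonempty: "site_edges (z::'d::finite \<Rightarrow> int) \<noteq> {}"
proof -
  obtain j :: 'd where True by blast
  have "nbr z (z(j := z j + 1))" using nbr_iff_unit_step[of z] by blast
  then show ?thesis unfolding site_edges_def by blast
qed

lemma site_edges_disjoint_Aclass:
  assumes "k \<ge> 2" and "z \<in> Aclass i k" and "z' \<in> Aclass i k" and "z \<noteq> z'"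
  shows "site_edges z \<inter> site_edges z' = {}"
proof (rule ccontr)
  assume "site_edges z \<inter> site_edges z' \<noteq> {}"
  then obtain y y' where "nbr z y" "nbr z' y'" "{z, y} = {z', y'}"
    unfolding site_edges_def by blast
  then have "nbr z z'" using \<open>z \<noteq> z'\<close> by (auto simp: doubleton_eq_iff)
  moreover have "(\<Sum>j\<in>UNIV. z j) mod int k = (\<Sum>j\<in>UNIV. z' j) mod int k"
    using assms(2,3) by (simp add: Aclass_def)
  then have "int k dvd (\<Sum>j\<in>UNIV. z j) - (\<Sum>j\<in>UNIV. z' j)"
    by (simp add: mod_eq_dvd_iff)
  ultimately have "int k dvd 1"
    using nbr_coordinate_sum[of z z'] by (metis add_diff_cancel_left' diff_diff_eq2 dvd_minus_iff minus_diff_eq)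
  then show False using \<open>k \<ge> 2\<close> by simp
qed

lemma Aclass_index_unique:
  assumes "i \<in> {1..k}" "i' \<in> {1..k}" "z \<in> Aclass i k" "z \<in> Aclass i' k"
  shows "i = i'"
proof -
  have "i mod k = i' mod k"
    using assms(3,4) by (simp add: Aclass_def) (metis of_nat_eq_iff zmod_int)
  then show ?thesis using assms(1,2) by (auto simp: mod_if split: if_splits)
qed

lemma finite_box: "finite (box n :: ('d::finite \<Rightarrow> int) set)"
proof -
  have box_PiE: "box n = PiE UNIV (\<lambda>_. {-int n..int n})"
    by (auto simp: box_def PiE_UNIV_domain Pi_iff abs_le_iff minus_le_iff)
  show ?thesis unfolding box_PiE by (intro finite_PiE) auto
qed

lemma box_mono: "n \<le> m \<Longrightarrow> box n \<subseteq> box m"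
  unfolding box_def by (auto intro: order_trans)

text \<open>Adjusting one coordinate reaches every residue class of the coordinate sum: with the other
  coordinates in \<open>[-n, n]\<close>, the \<open>j0\<close>-th coordinate runs through the \<open>k\<close> consecutive values
  starting at \<open>-n + k t\<close>, which stay in \<open>[-n, n]\<close> as long as \<open>k (t + 1) \<le> 2n + 1\<close>.\<close>

lemma adjust_coordinate_mem_box_Aclass:
  fixes f :: "'d::finite \<Rightarrow> int"
  assumes "k \<ge> 1" and "0 \<le> t" and "int k * (t + 1) \<le> 2 * int n + 1"
    and "\<And>j. j \<noteq> j0 \<Longrightarrow> \<bar>f j\<bar> \<le> int n"
  defines "s \<equiv> \<Sum>j\<in>UNIV - {j0}. f j"
  shows "f(j0 := - int n + int k * t + (int i + int n - s) mod int k) \<in> box n \<inter> Aclass i k"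
    (is "?z \<in> _")
proof
  define r where "r = (int i + int n - s) mod int k"
  have r: "0 \<le> r" "r < int k" using \<open>k \<ge> 1\<close> by (simp_all add: r_def)
  have "0 \<le> int k * t" using \<open>0 \<le> t\<close> by simp
  then have "\<bar>?z j0\<bar> \<le> int n"
    using r assms(3) by (simp add: r_def algebra_simps abs_le_iff)
  then have "\<bar>?z j\<bar> \<le> int n" for j
    using assms(4) by (cases "j = j0") auto
  then show "?z \<in> box n" unfolding box_def by blast
  have "(\<Sum>j\<in>UNIV. ?z j) = ?z j0 + (\<Sum>j\<in>UNIV - {j0}. ?z j)"
    by (rule sum.remove) auto
  also have "(\<Sum>j\<in>UNIV - {j0}. ?z j) = s"
    unfolding s_def by (intro sum.cong) auto
  finally have "(\<Sum>j\<in>UNIV. ?z j) = (int i + int n - s) mod int k + (s - int n + int k * t)"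
    by simp
  then have "(\<Sum>j\<in>UNIV. ?z j) mod int k = (int i + int k * t) mod int k"
    by (simp add: mod_add_left_eq)
  then show "?z \<in> Aclass i k" by (simp add: Aclass_def)
qed

lemma card_PiE_UNIV_update:
  fixes A B :: "'b set"
  shows "card (PiE UNIV (\<lambda>j::'d::finite. if j = j0 then A else B)) = card A * card B ^ (CARD('d) - 1)"
proof -
  have "card (PiE UNIV (\<lambda>j::'d. if j = j0 then A else B))
      = card A * (\<Prod>j\<in>UNIV - {j0}. card (if j = j0 then A else B))"
    by (simp add: card_PiE prod.remove[of UNIV j0])
  also have "\<dots> = card A * (\<Prod>j\<in>UNIV - {j0}. card B)"
    by (intro arg_cong2[where f = "(*)"] prod.cong) auto
  finally show ?thesis by (simp add: card_Diff_singleton)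
qed

lemma card_box_Aclass_ge:
  assumes "k \<ge> 1"
  shows "(2 * n + 1) ^ (CARD('d) - 1) * ((2 * n + 1) div k)
           \<le> card (box n \<inter> Aclass i k :: ('d::finite \<Rightarrow> int) set)"
proof -
  obtain j0 :: 'd where True by blast
  define m where "m = (2 * n + 1) div k"
  define F where "F j = (if j = j0 then {0..<int m} else {-int n..int n})" for j :: 'd
  define s where "s f = (\<Sum>j\<in>UNIV - {j0}. f j)" for f :: "'d \<Rightarrow> int"
  define \<Phi> where "\<Phi> f = f(j0 := - int n + int k * f j0 + (int i + int n - s f) mod int k)" for f
  have card_PiE_F: "card (PiE UNIV F) = (2 * n + 1) ^ (CARD('d) - 1) * m"
  proof -
    have "nat (2 * int n + 1) = 2 * n + 1" by (simp add: nat_eq_iff)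
    then show ?thesis unfolding F_def card_PiE_UNIV_update by simp
  qed
  have "inj_on \<Phi> (PiE UNIV F)"
  proof (rule inj_onI)
    fix f f' assume eq: "\<Phi> f = \<Phi> f'"
    have others: "f j = f' j" if "j \<noteq> j0" for j
      using fun_cong[OF eq, of j] that by (simp add: \<Phi>_def)
    then have "s f = s f'" unfolding s_def by (intro sum.cong) auto
    then have "f j0 = f' j0"
      using fun_cong[OF eq, of j0] \<open>k \<ge> 1\<close> by (simp add: \<Phi>_def)
    with others show "f = f'" by (metis ext)
  qed
  moreover have "\<Phi> ` PiE UNIV F \<subseteq> box n \<inter> Aclass i k"
  proof
    fix z assume "z \<in> \<Phi> ` PiE UNIV F"
    then obtain f where f: "\<And>j. f j \<in> F j" and z: "z = \<Phi> f"
      by (auto simp: PiE_UNIV_domain Pi_iff)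
    have "int k * (f j0 + 1) \<le> int k * int m"
      using f[of j0] by (intro mult_left_mono) (auto simp: F_def)
    also have "\<dots> \<le> 2 * int n + 1"
    proof -
      have "k * m \<le> 2 * n + 1" by (simp add: m_def)
      then show ?thesis by (metis of_nat_le_iff of_nat_mult of_nat_Suc of_nat_add mult_2
            Suc_eq_plus1 of_nat_1)
    qed
    finally have "int k * (f j0 + 1) \<le> 2 * int n + 1" .
    moreover have "0 \<le> f j0" using f[of j0] by (simp add: F_def)
    moreover have "\<bar>f j\<bar> \<le> int n" if "j \<noteq> j0" for j
      using f[of j] that by (simp add: F_def abs_le_iff)
    ultimately show "z \<in> box n \<inter> Aclass i k"
      unfolding z \<Phi>_def s_def using assms by (intro adjust_coordinate_mem_box_Aclass)
  qed
  ultimately have "card (PiE UNIV F) \<le> card (box n \<inter> Aclass i k :: ('d \<Rightarrow> int) set)"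
    using finite_box by (metis card_image card_mono finite_Int)
  then show ?thesis using card_PiE_F m_def by simp
qed

lemma card_box_Aclass_ge_real:
  assumes "k \<ge> 1" and "\<epsilon> > 0" and "(real k + \<epsilon>) * (real k - 2) \<le> \<epsilon> * real n"
  shows "(real k + \<epsilon> / 2) * (2 * real n) ^ CARD('d)
           \<le> real k * (real k + \<epsilon>) * real (card (box n \<inter> Aclass i k :: ('d::finite \<Rightarrow> int) set))"
proof -
  define D where "D = (2 * n + 1) div k"
  have "D * k + (2 * n + 1) mod k = 2 * n + 1" unfolding D_def by (rule div_mult_mod_eq)
  moreover have "(2 * n + 1) mod k < k" using \<open>k \<ge> 1\<close> by simp
  ultimately have "2 * real n + 2 - real k \<le> real k * real D"
    by (simp add: algebra_simps flip: of_nat_mult of_nat_add)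
  then have "(real k + \<epsilon>) * (2 * real n + 2 - real k) \<le> (real k + \<epsilon>) * (real k * real D)"
    using assms by (intro mult_left_mono) auto
  moreover have "(real k + \<epsilon> / 2) * (2 * real n) \<le> (real k + \<epsilon>) * (2 * real n + 2 - real k)"
    using assms(3) by (simp add: algebra_simps)
  ultimately have step: "(real k + \<epsilon> / 2) * (2 * real n) \<le> real k * (real k + \<epsilon>) * real D"
    by (simp add: algebra_simps)
  have "(real k + \<epsilon> / 2) * (2 * real n) ^ CARD('d)
          = (real k + \<epsilon> / 2) * (2 * real n) * (2 * real n) ^ (CARD('d) - 1)"
    by (simp add: power_eq_if)
  also have "\<dots> \<le> real k * (real k + \<epsilon>) * real D * (2 * real n + 1) ^ (CARD('d) - 1)"
    using assms by (intro mult_mono[OF step] power_mono) auto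
  also have "\<dots> = real k * (real k + \<epsilon>) * real ((2 * n + 1) ^ (CARD('d) - 1) * D)"
    by (simp add: algebra_simps)
  also have "\<dots> \<le> real k * (real k + \<epsilon>) * real (card (box n \<inter> Aclass i k :: ('d \<Rightarrow> int) set))"
  proof -
    have "(2 * n + 1) ^ (CARD('d) - 1) * D \<le> card (box n \<inter> Aclass i k :: ('d \<Rightarrow> int) set)"
      unfolding D_def by (rule card_box_Aclass_ge[OF \<open>k \<ge> 1\<close>])
    then have "real ((2 * n + 1) ^ (CARD('d) - 1) * D)
        \<le> real (card (box n \<inter> Aclass i k :: ('d \<Rightarrow> int) set))"
      by (simp only: of_nat_le_iff)
    then show ?thesis using assms by (intro mult_left_mono) auto
  qed
  finally show ?thesis .
qed

section \<open>Independence estimate\<close>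

definition all_sites_exceed ::
  "'a measure \<Rightarrow> (('d::finite \<Rightarrow> int) set \<Rightarrow> 'a \<Rightarrow> real) \<Rightarrow> real \<Rightarrow> ('d \<Rightarrow> int) set \<Rightarrow> 'a set"
  where "all_sites_exceed M w t S = {x \<in> space M. \<forall>z\<in>S. \<exists>e\<in>site_edges z. t < w e x}"

lemma all_sites_exceed_antimono:
  "S' \<subseteq> S \<Longrightarrow> t' \<le> t \<Longrightarrow> all_sites_exceed M w t S \<subseteq> all_sites_exceed M w t' S'"
  unfolding all_sites_exceed_def by (blast intro: order.strict_trans1)

lemma all_sites_exceed_eq_INT:
  "S \<noteq> {} \<Longrightarrow> all_sites_exceed M w t S = (\<Inter>z\<in>S. all_sites_exceed M w t {z})"
  unfolding all_sites_exceed_def by auto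

lemma sets_all_sites_exceed:
  fixes w :: "('d::finite \<Rightarrow> int) set \<Rightarrow> 'a \<Rightarrow> real"
  assumes "\<And>e. e \<in> edges \<Longrightarrow> w e \<in> borel_measurable M" and "finite S"
  shows "all_sites_exceed M w t S \<in> sets M"
  unfolding all_sites_exceed_def
proof (intro sets.sets_Collect_finite_All sets.sets_Collect_finite_Ex finite_site_edges \<open>finite S\<close>)
  fix z :: "'d \<Rightarrow> int" and e assume "e \<in> site_edges z"
  then have "w e \<in> borel_measurable M" using assms(1) site_edges_subset_edges by blast
  then show "{x \<in> space M. t < w e x} \<in> sets M" by measurable
qed

lemma (in prob_space) prob_site_exceeds_le:
  fixes w :: "('d::finite \<Rightarrow> int) set \<Rightarrow> 'a \<Rightarrow> real"
  assumes indep: "indep_vars (\<lambda>_. borel) w edges"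
    and law: "\<And>e. e \<in> edges \<Longrightarrow> distr M borel (w e) = W"
  shows "prob (all_sites_exceed M w t {z}) \<le> exp (- (measure W {..t} ^ (2 * CARD('d))))"
proof -
  define q where "q = measure W {..t}"
  have rv: "w e \<in> borel_measurable M" if "e \<in> edges" for e
    using indep that unfolding indep_vars_def2 by auto
  have prob_le: "prob (w e -` {..t} \<inter> space M) = q" if "e \<in> edges" for e
    using measure_distr[OF rv[OF that], of "{..t}"] law[OF that] by (simp add: q_def)
  obtain e0 where "e0 \<in> site_edges z" using site_edges_nonempty by blast
  then have "q = prob (w e0 -` {..t} \<inter> space M)"
    using prob_le site_edges_subset_edges by blast
  then have q: "0 \<le> q" "q \<le> 1" by simp_all
  have event: "all_sites_exceed M w t {z} \<in> events"
    by (intro sets_all_sites_exceed rv) simp_all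
  have "space M - all_sites_exceed M w t {z} = (\<Inter>e\<in>site_edges z. w e -` {..t} \<inter> space M)"
    using site_edges_nonempty[of z] by (auto simp: all_sites_exceed_def not_less)
  also have "prob \<dots> = (\<Prod>e\<in>site_edges z. prob (w e -` {..t} \<inter> space M))"
    using indep site_edges_subset_edges site_edges_nonempty finite_site_edges
    by (intro indep_varsD) auto
  also have "\<dots> = (\<Prod>e\<in>site_edges z. q)"
    using prob_le site_edges_subset_edges by (intro prod.cong) blast+
  also have "\<dots> = q ^ card (site_edges z)" by simp
  finally have "prob (all_sites_exceed M w t {z}) = 1 - q ^ card (site_edges z)"
    using prob_compl[OF event] by simp
  also have "\<dots> \<le> 1 - q ^ (2 * CARD('d))"
    using power_decreasing[OF card_site_edges_le q] by simp
  also have "\<dots> \<le> exp (- (q ^ (2 * CARD('d))))"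
    using exp_ge_add_one_self[of "- (q ^ (2 * CARD('d)))"] by simp
  finally show ?thesis by (simp add: q_def)
qed

lemma Int_stable_vimage_sets: "Int_stable {f -` A \<inter> \<Omega> | A. A \<in> sets N}"
proof (rule Int_stableI)
  fix a b assume "a \<in> {f -` A \<inter> \<Omega> | A. A \<in> sets N}" "b \<in> {f -` A \<inter> \<Omega> | A. A \<in> sets N}"
  then obtain A B where "a = f -` A \<inter> \<Omega>" "b = f -` B \<inter> \<Omega>" and "A \<in> sets N" "B \<in> sets N"
    by blast
  then show "a \<inter> b \<in> {f -` A \<inter> \<Omega> | A. A \<in> sets N}"
    by (intro CollectI exI[of _ "A \<inter> B"]) auto
qed

lemma (in prob_space) indep_events_site_exceeds:
  fixes w :: "('d::finite \<Rightarrow> int) set \<Rightarrow> 'a \<Rightarrow> real"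
  assumes indep: "indep_vars (\<lambda>_. borel) w edges"
    and "k \<ge> 2" and "S \<subseteq> Aclass i k"
  shows "indep_events (\<lambda>z. all_sites_exceed M w t {z}) S"
proof -
  define F where "F e = {w e -` A \<inter> space M | A. A \<in> sets borel}" for e
  define \<G> where "\<G> z = sigma_sets (space M) (\<Union>e\<in>site_edges z. F e)" for z
  have "indep_sets F edges" using indep unfolding indep_vars_def2 F_def by auto
  have "indep_sets \<G> S"
    unfolding \<G>_def
  proof (rule indep_sets_collect_sigma)
    show "indep_sets F (\<Union>z\<in>S. site_edges z)"
      using site_edges_subset_edges by (intro indep_sets_mono_index[OF _ \<open>indep_sets F edges\<close>]) blast
    show "Int_stable (F e)" for e
      unfolding F_def by (rule Int_stable_vimage_sets)
    show "disjoint_family_on site_edges S"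
      unfolding disjoint_family_on_def
      using site_edges_disjoint_Aclass[OF \<open>k \<ge> 2\<close>] \<open>S \<subseteq> Aclass i k\<close> by blast
  qed
  moreover have "all_sites_exceed M w t {z} \<in> \<G> z" for z
  proof -
    interpret \<G>: sigma_algebra "space M" "\<G> z"
      unfolding \<G>_def F_def by (intro sigma_algebra_sigma_sets) auto
    have "all_sites_exceed M w t {z} = (\<Union>e\<in>site_edges z. w e -` {t<..} \<inter> space M)"
      by (auto simp: all_sites_exceed_def)
    also have "\<dots> \<in> \<G> z"
    proof (rule \<G>.finite_UN[OF finite_site_edges])
      fix e assume "e \<in> site_edges z"
      moreover have "w e -` {t<..} \<inter> space M \<in> F e"
        unfolding F_def by (intro CollectI exI[of _ "{t<..}"]) simp
      ultimately show "w e -` {t<..} \<inter> space M \<in> \<G> z"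
        unfolding \<G>_def by (intro sigma_sets.Basic UN_I)
    qed
    finally show ?thesis .
  qed
  ultimately show ?thesis
    unfolding indep_events_def_alt by (auto intro: indep_sets_mono_sets)
qed

lemma (in prob_space) prob_all_sites_exceed_le:
  fixes w :: "('d::finite \<Rightarrow> int) set \<Rightarrow> 'a \<Rightarrow> real"
  assumes indep: "indep_vars (\<lambda>_. borel) w edges"
    and law: "\<And>e. e \<in> edges \<Longrightarrow> distr M borel (w e) = W"
    and "k \<ge> 2" and "finite S" and "S \<subseteq> Aclass i k"
  shows "prob (all_sites_exceed M w t S) \<le> exp (- real (card S) * measure W {..t} ^ (2 * CARD('d)))"
proof (cases "S = {}")
  case False
  have "prob (all_sites_exceed M w t S) = prob (\<Inter>z\<in>S. all_sites_exceed M w t {z})"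
    by (simp only: all_sites_exceed_eq_INT[OF False])
  also have "\<dots> = (\<Prod>z\<in>S. prob (all_sites_exceed M w t {z}))"
    using indep_events_site_exceeds[OF indep assms(3,5)] \<open>finite S\<close> False
    by (simp add: indep_events_def)
  also have "\<dots> \<le> (\<Prod>z\<in>S. exp (- (measure W {..t} ^ (2 * CARD('d)))))"
    using prob_site_exceeds_le[OF indep law] by (intro prod_mono) auto
  also have "\<dots> = exp (- real (card S) * measure W {..t} ^ (2 * CARD('d)))"
    by (simp add: exp_of_nat_mult[symmetric])
  finally show ?thesis .
next
  case True
  then show ?thesis by (simp add: all_sites_exceed_def)
qed

section \<open>Borel--Cantelli along dyadic scales\<close>

lemma limsup_subset_dyadic_limsup:
  fixes E F :: "nat \<Rightarrow> 'a set"
  assumes "\<And>n j. 2 ^ j \<le> n \<Longrightarrow> n < 2 ^ Suc j \<Longrightarrow> E n \<subseteq> F j"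
  shows "limsup E \<subseteq> limsup F"
  unfolding limsup_INF_SUP
proof (intro subsetI INT_I)
  fix x m assume "x \<in> (\<Inter>m. \<Union>n\<in>{m..}. E n)"
  then obtain n where "n \<ge> 2 ^ m" and "x \<in> E n" by blast
  moreover have "n \<ge> 1" using \<open>n \<ge> 2 ^ m\<close> by (meson le_trans one_le_power one_le_numeral)
  then obtain j where j: "2 ^ j \<le> n" "n < 2 ^ Suc j" using ex_power_ivl1[of 2 n] by auto
  moreover have "m \<le> j"
  proof (rule ccontr)
    assume "\<not> m \<le> j"
    then have "(2::nat) ^ Suc j \<le> 2 ^ m" by (intro power_increasing) auto
    then show False using \<open>n \<ge> 2 ^ m\<close> j(2) by linarith
  qed
  ultimately show "x \<in> (\<Union>j\<in>{m..}. F j)" using assms by blast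
qed

lemma le_mult_of_le_divide:
  fixes a b c :: real
  assumes "c \<le> a / b" and "c > 0" and "a \<ge> 0"
  shows "c * b \<le> a"
proof -
  have "b > 0"
    using assms by (metis divide_nonneg_nonpos not_le order.strict_trans2)
  then show ?thesis using assms(1) by (simp add: pos_le_divide_eq)
qed

lemma exp_neg_ln_ln_two_power_le:
  assumes "\<beta> \<ge> 0"
  shows "exp (- (\<beta> * ln (ln (2 ^ Suc j)))) \<le> 2 powr \<beta> * real (Suc j) powr (- \<beta>)"
proof -
  have ln_N: "ln (2 ^ Suc j :: real) = real (Suc j) * ln 2" by (rule ln_realpow)
  have "real (Suc j) * (1 / 2) \<le> real (Suc j) * ln 2"
    using ln2_ge_two_thirds by (intro mult_left_mono) auto
  then have "real (Suc j) / 2 \<le> ln (2 ^ Suc j :: real)" unfolding ln_N by linarith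
  moreover have "ln (2 ^ Suc j :: real) > 0" unfolding ln_N by simp
  then have "exp (- (\<beta> * ln (ln (2 ^ Suc j)))) = ln (2 ^ Suc j :: real) powr (- \<beta>)"
    by (simp add: powr_def)
  ultimately have "exp (- (\<beta> * ln (ln (2 ^ Suc j)))) \<le> (real (Suc j) / 2) powr (- \<beta>)"
    using assms by (simp add: powr_mono2')
  also have "\<dots> = 2 powr \<beta> * real (Suc j) powr (- \<beta>)"
    by (simp add: powr_divide powr_minus_divide)
  finally show ?thesis .
qed

lemma (in prob_space) prob_box_Aclass_exceed_le:
  fixes w :: "('d::finite \<Rightarrow> int) set \<Rightarrow> 'a \<Rightarrow> real" and g :: "real \<Rightarrow> real"
  assumes indep: "indep_vars (\<lambda>_. borel) w edges"
    and law: "\<And>e. e \<in> edges \<Longrightarrow> distr M borel (w e) = W"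
    and "k \<ge> 2" and "\<epsilon> > 0"
    and growth: "real k + \<epsilon> \<le> Lambda W g CARD('d) (2 * real n) / ln (ln (2 * real n))"
    and large: "(real k + \<epsilon>) * (real k - 2) \<le> \<epsilon> * real n"
  shows "prob (all_sites_exceed M w (g (2 * real n)) (box n \<inter> Aclass i k))
           \<le> exp (- ((real k + \<epsilon> / 2) / real k * ln (ln (2 * real n))))"
proof -
  define S where "S = (box n \<inter> Aclass i k :: ('d \<Rightarrow> int) set)"
  define q where "q = measure W {..g (2 * real n)} ^ (2 * CARD('d))"
  define L where "L = ln (ln (2 * real n))"
  have pos: "real k > 0" "real k + \<epsilon> / 2 > 0" "real k + \<epsilon> > 0" "q \<ge> 0"
    using assms by (simp_all add: q_def)
  have "(real k + \<epsilon>) * L \<le> (2 * real n) ^ CARD('d) * q"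
    using le_mult_of_le_divide[OF growth] pos by (simp add: Lambda_def q_def L_def)
  have "((real k + \<epsilon> / 2) / real k * L) * (real k * (real k + \<epsilon>))
      = (real k + \<epsilon> / 2) * ((real k + \<epsilon>) * L)"
    using pos by (simp add: field_simps)
  also have "\<dots> \<le> (real k + \<epsilon> / 2) * ((2 * real n) ^ CARD('d) * q)"
    using \<open>(real k + \<epsilon>) * L \<le> _\<close> pos by (intro mult_left_mono) auto
  also have "\<dots> = ((real k + \<epsilon> / 2) * (2 * real n) ^ CARD('d)) * q"
    by (simp add: mult.assoc)
  also have "\<dots> \<le> (real k * (real k + \<epsilon>) * real (card S)) * q"
    unfolding S_def using assms pos by (intro mult_right_mono card_box_Aclass_ge_real) auto
  also have "\<dots> = (real (card S) * q) * (real k * (real k + \<epsilon>))"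
    by (simp add: algebra_simps)
  finally have key: "(real k + \<epsilon> / 2) / real k * L \<le> real (card S) * q"
    by (rule mult_right_le_imp_le) (use pos in simp)
  have "prob (all_sites_exceed M w (g (2 * real n)) S) \<le> exp (- real (card S) * q)"
    unfolding q_def S_def using indep law \<open>k \<ge> 2\<close>
    by (intro prob_all_sites_exceed_le) (auto simp: finite_box)
  also have "\<dots> \<le> exp (- ((real k + \<epsilon> / 2) / real k * L))"
    using key by simp
  finally show ?thesis by (simp add: S_def L_def)
qed

lemma (in prob_space) eventually_prob_dyadic_box_exceed_le:
  fixes w :: "('d::finite \<Rightarrow> int) set \<Rightarrow> 'a \<Rightarrow> real" and g :: "real \<Rightarrow> real"
  assumes indep: "indep_vars (\<lambda>_. borel) w edges"
    and law: "\<And>e. e \<in> edges \<Longrightarrow> distr M borel (w e) = W"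
    and "k \<ge> 2" and "\<epsilon> > 0"
    and growth: "\<And>n. n \<ge> nstar \<Longrightarrow> real k + \<epsilon> \<le> Lambda W g CARD('d) (real n) / ln (ln (real n))"
  defines "\<beta> \<equiv> (real k + \<epsilon> / 2) / real k"
  shows "eventually (\<lambda>j. prob (all_sites_exceed M w (g (2 * real ((2::nat) ^ j))) (box (2 ^ j) \<inter> Aclass i k))
           \<le> 2 powr \<beta> * real (Suc j) powr (- \<beta>)) sequentially"
proof (rule eventually_mono[OF eventually_ge_at_top])
  fix j assume "nstar + nat \<lceil>(real k + \<epsilon>) * (real k - 2) / \<epsilon>\<rceil> \<le> j"
  moreover have "j < 2 ^ j" by (rule less_exp)
  ultimately have "nstar \<le> 2 * 2 ^ j" and "(real k + \<epsilon>) * (real k - 2) / \<epsilon> \<le> real (2 ^ j)"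
    by linarith+
  then have "real k + \<epsilon> \<le> Lambda W g CARD('d) (2 * real (2 ^ j)) / ln (ln (2 * real (2 ^ j)))"
    and "(real k + \<epsilon>) * (real k - 2) \<le> \<epsilon> * real (2 ^ j)"
    using growth[of "2 * 2 ^ j"] \<open>\<epsilon> > 0\<close> by (simp_all add: pos_divide_le_eq mult.commute)
  then have "prob (all_sites_exceed M w (g (2 * real ((2::nat) ^ j))) (box (2 ^ j) \<inter> Aclass i k))
      \<le> exp (- (\<beta> * ln (ln (2 * real (2 ^ j)))))"
    unfolding \<beta>_def using indep law \<open>k \<ge> 2\<close> \<open>\<epsilon> > 0\<close>
    by (intro prob_box_Aclass_exceed_le) auto
  also have "\<dots> \<le> 2 powr \<beta> * real (Suc j) powr (- \<beta>)"
    using exp_neg_ln_ln_two_power_le[of \<beta> j] \<open>\<epsilon> > 0\<close> by (simp add: \<beta>_def)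
  finally show "prob (all_sites_exceed M w (g (2 * real ((2::nat) ^ j))) (box (2 ^ j) \<inter> Aclass i k))
      \<le> 2 powr \<beta> * real (Suc j) powr (- \<beta>)" .
qed

text \<open>For \<open>2^j \<le> n < 2^(j+1)\<close> the event at scale \<open>n\<close> is contained in the one with the smaller
  box \<open>box (2^j)\<close> and the smaller threshold \<open>g (2^(j+1))\<close>; the latter have summable probabilities.\<close>

lemma (in prob_space) limsup_all_sites_exceed_null:
  fixes w :: "('d::finite \<Rightarrow> int) set \<Rightarrow> 'a \<Rightarrow> real" and g :: "real \<Rightarrow> real"
  assumes indep: "indep_vars (\<lambda>_. borel) w edges"
    and law: "\<And>e. e \<in> edges \<Longrightarrow> distr M borel (w e) = W"
    and g_mono: "antimono_on {0<..} g"
    and "k \<ge> 2"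
    and growth: "\<exists>\<epsilon>>0. \<exists>nstar::nat. \<forall>n\<ge>nstar.
                   Lambda W g CARD('d) (real n) / ln (ln (real n)) \<ge> real k + \<epsilon>"
  shows "limsup (\<lambda>n. all_sites_exceed M w (g (real n)) (box n \<inter> Aclass i k)) \<in> null_sets M"
proof -
  obtain \<epsilon> nstar where "\<epsilon> > 0" and growth_n: "\<And>n. n \<ge> nstar \<Longrightarrow>
      real k + \<epsilon> \<le> Lambda W g CARD('d) (real n) / ln (ln (real n))"
    using growth by blast
  define \<beta> where "\<beta> = (real k + \<epsilon> / 2) / real k"
  define E where "E n = all_sites_exceed M w (g (real n)) (box n \<inter> Aclass i k)" for n
  define B where "B j = all_sites_exceed M w (g (2 * real ((2::nat) ^ j))) (box (2 ^ j) \<inter> Aclass i k)"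
    for j
  have events: "all_sites_exceed M w t (box n \<inter> Aclass i k) \<in> events" for t n
    using indep unfolding indep_vars_def2
    by (intro sets_all_sites_exceed) (auto simp: finite_box)
  have "\<beta> > 1" using \<open>\<epsilon> > 0\<close> \<open>k \<ge> 2\<close> by (simp add: \<beta>_def field_simps)
  then have "summable (\<lambda>j. 2 powr \<beta> * real (Suc j) powr (- \<beta>))"
    using summable_Suc_iff[of "\<lambda>j. real j powr (- \<beta>)"] summable_real_powr_iff[of "- \<beta>"]
    by (intro summable_mult) simp
  moreover have "eventually (\<lambda>j. norm (prob (B j)) \<le> 2 powr \<beta> * real (Suc j) powr (- \<beta>)) sequentially"
    using eventually_prob_dyadic_box_exceed_le[OF indep law \<open>k \<ge> 2\<close> \<open>\<epsilon> > 0\<close> growth_n]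
    unfolding B_def \<beta>_def by simp
  ultimately have "summable (\<lambda>j. prob (B j))"
    by (rule summable_comparison_test_ev[rotated])
  then have "limsup B \<in> null_sets M"
    using events unfolding B_def by (intro borel_cantelli_limsup1) (auto simp flip: less_top)
  moreover have "limsup E \<subseteq> limsup B"
  proof (rule limsup_subset_dyadic_limsup)
    fix n j :: nat assume "2 ^ j \<le> n" "n < 2 ^ Suc j"
    then have "real n \<le> real (2 * 2 ^ j)" and "0 < real n"
      by (simp_all only: of_nat_le_iff) auto
    then have "g (2 * real (2 ^ j)) \<le> g (real n)"
      using monotone_onD[OF g_mono, of "real n" "2 * real (2 ^ j)"] by simp
    with \<open>2 ^ j \<le> n\<close> show "E n \<subseteq> B j"
      unfolding E_def B_def by (intro all_sites_exceed_antimono Int_mono box_mono) auto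
  qed
  ultimately show ?thesis
    using events unfolding E_def by (auto intro: null_sets_subset measurable_limsup)
qed

lemma (in prob_space) AE_eventually_not_in_of_limsup_null:
  "limsup A \<in> null_sets M \<Longrightarrow> AE x in M. eventually (\<lambda>n. x \<notin> A n) sequentially"
  by (rule AE_mp[OF AE_not_in]) (auto simp: limsup_INF_SUP eventually_sequentially)

section \<open>Small conductance sums\<close>

lemma pi_site_le_of_site_edges_le:
  fixes z :: "'d::finite \<Rightarrow> int"
  assumes "0 \<le> t" and "\<forall>e\<in>site_edges z. w e \<le> t"
  shows "pi_site w z \<le> 2 * real CARD('d) * t"
proof -
  have "pi_site w z \<le> (\<Sum>y\<in>{y. nbr z y}. t)"
    unfolding pi_site_def using assms(2) by (intro sum_mono) (auto simp: site_edges_def)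
  also have "\<dots> = real (card {y. nbr z y}) * t" by simp
  also have "\<dots> \<le> real (2 * CARD('d)) * t"
    using card_nbr_le[of z] assms(1) by (intro mult_right_mono) auto
  finally show ?thesis by simp
qed

lemma exists_sites_small_pi:
  fixes w :: "('d::finite \<Rightarrow> int) set \<Rightarrow> real"
  assumes "0 \<le> t"
    and "\<And>i. i \<in> {1..k} \<Longrightarrow> \<exists>z\<in>box n \<inter> Aclass i k. \<forall>e\<in>site_edges z. w e \<le> t"
  shows "\<exists>Z. Z \<subseteq> box n \<and> card Z = k \<and>
           (\<forall>z\<in>Z. pi_site w z \<le> 2 * real CARD('d) * t)"
proof -
  obtain site :: "nat \<Rightarrow> 'd \<Rightarrow> int" where
    site: "\<And>i. i \<in> {1..k} \<Longrightarrow> site i \<in> box n \<inter> Aclass i k \<and> (\<forall>e\<in>site_edges (site i). w e \<le> t)"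
    using assms(2) by metis
  have "inj_on site {1..k}"
    using site Aclass_index_unique by (metis IntD2 inj_onI)
  then have "card (site ` {1..k}) = k" by (simp add: card_image)
  moreover have "site ` {1..k} \<subseteq> box n" using site by blast
  moreover have "\<forall>z\<in>site ` {1..k}. pi_site w z \<le> 2 * real CARD('d) * t"
    using site pi_site_le_of_site_edges_le[OF assms(1)] by blast
  ultimately show ?thesis by blast
qed

lemma (in prob_space) AE_eventually_sites_small_pi:
  fixes w :: "('d::finite \<Rightarrow> int) set \<Rightarrow> 'a \<Rightarrow> real" and g :: "real \<Rightarrow> real"
  assumes null: "\<And>i. i \<in> {1..k} \<Longrightarrow>
      limsup (\<lambda>n. all_sites_exceed M w (g (real n)) (box n \<inter> Aclass i k)) \<in> null_sets M"
    and g_pos: "\<And>u. u > 0 \<Longrightarrow> g u > 0"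
  shows "AE x in M. eventually (\<lambda>n. \<exists>Z. Z \<subseteq> box n \<and> card Z = k \<and>
           (\<forall>z\<in>Z. pi_site (\<lambda>e. w e x) z \<le> 2 * real CARD('d) * g (real n))) sequentially"
proof -
  have "AE x in M. \<forall>i\<in>{1..k}.
      eventually (\<lambda>n. x \<notin> all_sites_exceed M w (g (real n)) (box n \<inter> Aclass i k)) sequentially"
    by (intro AE_finite_allI AE_eventually_not_in_of_limsup_null null) simp_all
  then show ?thesis
    using AE_space
  proof eventually_elim
    case (elim x)
    then have "eventually (\<lambda>n. 0 < n \<and>
        (\<forall>i\<in>{1..k}. x \<notin> all_sites_exceed M w (g (real n)) (box n \<inter> Aclass i k))) sequentially"
      by (intro eventually_conj eventually_gt_at_top eventually_ball_finite) auto
    then show ?case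
    proof (rule eventually_mono)
      fix n assume "0 < n \<and> (\<forall>i\<in>{1..k}. x \<notin> all_sites_exceed M w (g (real n)) (box n \<inter> Aclass i k))"
      with \<open>x \<in> space M\<close> show "\<exists>Z. Z \<subseteq> box n \<and> card Z = k \<and>
          (\<forall>z\<in>Z. pi_site (\<lambda>e. w e x) z \<le> 2 * real CARD('d) * g (real n))"
        by (intro exists_sites_small_pi less_imp_le g_pos) (auto simp: all_sites_exceed_def not_less)
    qed
  qed
qed

theorem lemma2p5:
  fixes M :: "'a measure"
    and w :: "('d::finite \<Rightarrow> int) set \<Rightarrow> 'a \<Rightarrow> real"
    and W :: "real measure"
    and g :: "real \<Rightarrow> real"
    and k :: nat
  assumes dim: "CARD('d) \<ge> 2"
    and M: "prob_space M"
    and indep: "prob_space.indep_vars M (\<lambda>_. borel) w edges"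
    and law: "\<And>e. e \<in> edges \<Longrightarrow> distr M borel (w e) = W"
    and pos: "\<And>e x. e \<in> edges \<Longrightarrow> x \<in> space M \<Longrightarrow> w e x > 0"
    and g_pos: "\<And>u. u > 0 \<Longrightarrow> g u > 0"
    and g_mono: "antimono_on {0<..} g"
    and g_lim: "(g \<longlongrightarrow> 0) at_top"
    and k: "k \<ge> 2"
    and growth: "\<exists>\<epsilon>>0. \<exists>nstar::nat. \<forall>n\<ge>nstar.
                   Lambda W g CARD('d) (real n) / ln (ln (real n)) \<ge> real k + \<epsilon>"
  shows "(\<forall>i\<in>{1..k}.
            (let L = (\<Inter>m. \<Union>n\<in>{m..}.
               {x \<in> space M. \<forall>z\<in>box n \<inter> Aclass i k.
                  J (g (real n)) (shift_edges origin_edges z) (\<lambda>e. w e x)})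
             in L \<in> sets M \<and> measure M L = 0))
       \<and> (AE x in M. eventually (\<lambda>n. \<exists>Z. Z \<subseteq> box n \<and> card Z = k \<and>
              (\<forall>z\<in>Z. pi_site (\<lambda>e. w e x) z \<le> 2 * real CARD('d) * g (real n))) sequentially)"
proof -
  interpret prob_space M by (rule M)
  define E where "E i n = all_sites_exceed M w (g (real n)) (box n \<inter> Aclass i k)" for i n
  have null: "limsup (E i) \<in> null_sets M" for i
    unfolding E_def using indep law g_mono k growth by (rule limsup_all_sites_exceed_null)
  have "(\<Inter>m. \<Union>n\<in>{m..}. {x \<in> space M. \<forall>z\<in>box n \<inter> Aclass i k.
           J (g (real n)) (shift_edges origin_edges z) (\<lambda>e. w e x)}) = limsup (E i)" for i
    by (simp add: limsup_INF_SUP E_def all_sites_exceed_def J_def shift_origin_edges)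
  then have "\<forall>i\<in>{1..k}. (let L = (\<Inter>m. \<Union>n\<in>{m..}. {x \<in> space M. \<forall>z\<in>box n \<inter> Aclass i k.
      J (g (real n)) (shift_edges origin_edges z) (\<lambda>e. w e x)}) in L \<in> sets M \<and> measure M L = 0)"
    using null by (auto simp: Let_def measure_def null_setsD1 intro: null_setsD2)
  moreover have "AE x in M. eventually (\<lambda>n. \<exists>Z. Z \<subseteq> box n \<and> card Z = k \<and>
      (\<forall>z\<in>Z. pi_site (\<lambda>e. w e x) z \<le> 2 * real CARD('d) * g (real n))) sequentially"
    using null g_pos unfolding E_def by (rule AE_eventually_sites_small_pi)
  ultimately show ?thesis by blast
qed

end
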